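(* Let $s$ be a positive integer and $G$ an undirected graph. There exists an $(s,s)$-dissolution for $G$ if and only if $G$ has a perfect matching.
   Context: For $V'\subseteq V(G)$ let $Z(V',G):=\{(x,y)\mid x\in V',\ y\in V(G)\setminus V',\ \{x,y\}\in E(G)\}$. For positive integers $s,\Delta_s$, an $(s,\Delta_s)$-dissolution for $G$ is a pair $(D,z)$ with $D\subset V(G)$ and $z\colon Z(D,G)\to\{0,\dots,s\}$ such that (a) each $v'\in D$ satisfies $\sum_{(v',v)\in Z(D,G)} z(v',v)=s$, and (b) each $v\in V(G)\setminus D$ satisfies $\sum_{(v',v)\in Z(D,G)} z(v',v)=\Delta_s$. *)

theory Defs
  imports Main
begin

definition simple_graph :: "'a set \<Rightarrow> 'a set set \<Rightarrow> bool" where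
  "simple_graph V E \<longleftrightarrow> finite V \<and>
     (\<forall>e\<in>E. \<exists>x y. x \<noteq> y \<and> e = {x, y} \<and> x \<in> V \<and> y \<in> V)"

definition Zset :: "'a set \<Rightarrow> 'a set set \<Rightarrow> 'a set \<Rightarrow> ('a \<times> 'a) set" where
  "Zset V E D = {(x, y). x \<in> D \<and> y \<in> V - D \<and> {x, y} \<in> E}"

text \<open>(s, Delta_s)-dissolution (D, z) for G = (V, E); only the values of z on Z(D,G) matter.\<close>
definition dissolution :: "nat \<Rightarrow> nat \<Rightarrow> 'a set \<Rightarrow> 'a set set \<Rightarrow> 'a set \<Rightarrow> ('a \<times> 'a \<Rightarrow> nat) \<Rightarrow> bool" where
  "dissolution s \<Delta> V E D z \<longleftrightarrow> D \<subseteq> V \<and>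
     (\<forall>p\<in>Zset V E D. z p \<le> s) \<and>
     (\<forall>v'\<in>D. (\<Sum>p\<in>{p \<in> Zset V E D. fst p = v'}. z p) = s) \<and>
     (\<forall>v\<in>V - D. (\<Sum>p\<in>{p \<in> Zset V E D. snd p = v}. z p) = \<Delta>)"

definition perfect_matching :: "'a set \<Rightarrow> 'a set set \<Rightarrow> 'a set set \<Rightarrow> bool" where
  "perfect_matching V E M \<longleftrightarrow> M \<subseteq> E \<and> (\<forall>v\<in>V. \<exists>!e\<in>M. v \<in> e)"

end

theory Submission
  imports Defs
begin

text \<open>
  An \<open>(s, s)\<close>-dissolution \<open>(D, z)\<close> is a weighting of the bipartite graph of edges between \<open>D\<close>
  and \<open>V - D\<close> in which every vertex has weighted degree \<open>s\<close>. Counting the total weight from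
  both sides gives \<open>|D| = |V - D|\<close>, and counting the weight leaving any \<open>X \<subseteq> D\<close> shows that
  the edges of positive weight satisfy Hall's condition. Hall's marriage theorem then gives a
  bijection \<open>D \<rightarrow> V - D\<close> along edges, i.e. a perfect matching. Conversely, orienting each edge
  of a perfect matching away from one chosen endpoint and giving it weight \<open>s\<close> yields a
  dissolution.
\<close>

lemma Hall_condition_nonempty:
  assumes "\<forall>X\<subseteq>A. card X \<le> card (\<Union>(N ` X))" and "x \<in> A"
  shows "N x \<noteq> {}"
proof -
  have "{x} \<subseteq> A" using assms(2) by simp
  with assms(1) have "card {x} \<le> card (\<Union>(N ` {x}))" by blast
  then show ?thesis by auto
qed

lemma Hall_condition_remove_target:
  assumes surplus: "\<forall>X. X \<subseteq> A \<and> X \<noteq> {} \<and> X \<noteq> A \<longrightarrow> card X < card (\<Union>(N ` X))"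
    and "a \<in> A"
  shows "\<forall>X\<subseteq>A - {a}. card X \<le> card (\<Union>x\<in>X. N x - {b})"
proof (intro allI impI)
  fix X assume X: "X \<subseteq> A - {a}"
  show "card X \<le> card (\<Union>x\<in>X. N x - {b})"
  proof (cases "X = {}")
    case False
    with X \<open>a \<in> A\<close> surplus have "card X < card (\<Union>(N ` X))" by blast
    moreover have "card (\<Union>(N ` X)) \<le> Suc (card (\<Union>(N ` X) - {b}))"
      by (cases "b \<in> \<Union>(N ` X)") (simp_all add: card_Diff_singleton)
    moreover have "(\<Union>x\<in>X. N x - {b}) = \<Union>(N ` X) - {b}" by blast
    ultimately show ?thesis by simp
  qed simp
qed

lemma Hall_condition_remove_critical:
  assumes hall: "\<forall>X\<subseteq>A. card X \<le> card (\<Union>(N ` X))"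
    and "finite A" and "C \<subseteq> A" and critical: "card (\<Union>(N ` C)) \<le> card C"
  shows "\<forall>Y\<subseteq>A - C. card Y \<le> card (\<Union>y\<in>Y. N y - \<Union>(N ` C))"
proof (intro allI impI)
  fix Y assume Y: "Y \<subseteq> A - C"
  have "finite C" using \<open>C \<subseteq> A\<close> \<open>finite A\<close> by (rule finite_subset)
  moreover have "finite Y" using Y \<open>finite A\<close> by (meson Diff_subset finite_subset subset_trans)
  moreover have "C \<inter> Y = {}" using Y by blast
  ultimately have "card C + card Y = card (C \<union> Y)" by (simp add: card_Un_disjoint)
  also have "\<dots> \<le> card (\<Union>(N ` (C \<union> Y)))"
  proof -
    have "C \<union> Y \<subseteq> A" using \<open>C \<subseteq> A\<close> Y by blast
    with hall show ?thesis by blast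
  qed
  also have "\<Union>(N ` (C \<union> Y)) = \<Union>(N ` C) \<union> (\<Union>y\<in>Y. N y - \<Union>(N ` C))" by blast
  also have "card \<dots> \<le> card (\<Union>(N ` C)) + card (\<Union>y\<in>Y. N y - \<Union>(N ` C))" by (rule card_Un_le)
  finally show "card Y \<le> card (\<Union>y\<in>Y. N y - \<Union>(N ` C))" using critical by simp
qed

text \<open>Halmos and Vaughan's induction: if every proper nonempty subset of \<open>A\<close> has strictly
  more neighbours than elements, match one element arbitrarily and recurse; otherwise a critical
  subset \<open>C\<close> with exactly \<open>card C\<close> neighbours can be matched on its own, and its neighbours
  are removed for the rest.\<close>

theorem Hall_marriage:
  assumes "finite A" and "\<forall>X\<subseteq>A. card X \<le> card (\<Union>(N ` X))"
  shows "\<exists>f. inj_on f A \<and> (\<forall>x\<in>A. f x \<in> N x)"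
  using assms
proof (induction "card A" arbitrary: A N rule: less_induct)
  case less
  note IH = less.hyps and hall = less.prems(2)
  consider "A = {}"
    | (surplus) "A \<noteq> {}" "\<forall>X. X \<subseteq> A \<and> X \<noteq> {} \<and> X \<noteq> A \<longrightarrow> card X < card (\<Union>(N ` X))"
    | (critical) C where "C \<subseteq> A" "C \<noteq> {}" "C \<noteq> A" "card (\<Union>(N ` C)) \<le> card C"
    by (meson not_le)
  then show ?case
  proof cases
    case surplus
    then obtain a where a: "a \<in> A" by blast
    then obtain b where b: "b \<in> N a" using Hall_condition_nonempty[OF hall] by blast
    have "card (A - {a}) < card A" using a \<open>finite A\<close> by (rule card_Diff1_less[rotated])
    then obtain f where f: "inj_on f (A - {a})" "\<forall>x\<in>A - {a}. f x \<in> N x - {b}"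
      using IH \<open>finite A\<close> Hall_condition_remove_target[OF surplus(2) a] by blast
    let ?f = "\<lambda>x. if x \<in> {a} then b else f x"
    have "inj_on ?f ({a} \<union> (A - {a}))"
      by (rule inj_on_disjoint_Un) (use f in auto)
    then have "inj_on ?f A" by (simp add: insert_absorb[OF a])
    moreover have "\<forall>x\<in>A. ?f x \<in> N x" using f b by auto
    ultimately show ?thesis by blast
  next
    case critical
    have "card C < card A" and "card (A - C) < card A"
      using critical \<open>finite A\<close> by (auto intro: psubset_card_mono)
    moreover have "finite C" and "finite (A - C)"
      using critical(1) \<open>finite A\<close> finite_subset by blast+
    moreover have "\<forall>X\<subseteq>C. card X \<le> card (\<Union>(N ` X))" using hall critical(1) by blast
    ultimately obtain g h where
      g: "inj_on g C" "\<forall>x\<in>C. g x \<in> N x" and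
      h: "inj_on h (A - C)" "\<forall>x\<in>A - C. h x \<in> N x - \<Union>(N ` C)"
      using IH[of C N] IH[of "A - C" "\<lambda>x. N x - \<Union>(N ` C)"]
        Hall_condition_remove_critical[OF hall \<open>finite A\<close> critical(1,4)] by blast
    let ?f = "\<lambda>x. if x \<in> C then g x else h x"
    have "g ` C \<subseteq> \<Union>(N ` C)" using g(2) by blast
    moreover have "h ` (A - C) \<inter> \<Union>(N ` C) = {}" using h(2) by blast
    ultimately have "inj_on ?f (C \<union> (A - C))"
      by (intro inj_on_disjoint_Un[OF g(1) h(1)]) blast
    then have "inj_on ?f A" using critical(1) by (simp add: Un_absorb1)
    moreover have "\<forall>x\<in>A. ?f x \<in> N x" using g h by auto
    ultimately show ?thesis by blast
  qed simp
qed

lemma sum_constant_fibres: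
  fixes z :: "'p \<Rightarrow> 'b::semiring_1"
  assumes "finite P" and "finite X" and "\<forall>x\<in>X. (\<Sum>p\<in>{p\<in>P. h p = x}. z p) = s"
  shows "(\<Sum>p\<in>{p\<in>P. h p \<in> X}. z p) = of_nat (card X) * s"
proof -
  have "(\<Sum>p\<in>{p\<in>P. h p \<in> X}. z p) = (\<Sum>x\<in>X. sum z {p. p \<in> {p\<in>P. h p \<in> X} \<and> h p = x})"
    by (rule sum.group[symmetric]) (use assms(1,2) in auto)
  also have "\<dots> = (\<Sum>x\<in>X. \<Sum>p\<in>{p\<in>P. h p = x}. z p)"
    by (intro sum.cong refl arg_cong[where f = "sum z"]) auto
  also have "\<dots> = of_nat (card X) * s" using assms(3) by simp
  finally show ?thesis .
qed

locale regular_bipartite_weighting =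
  fixes P :: "('a \<times> 'b) set" and D :: "'a set" and R :: "'b set"
    and z :: "'a \<times> 'b \<Rightarrow> nat" and s :: nat
  assumes P_subset: "P \<subseteq> D \<times> R" and finite_D: "finite D" and finite_R: "finite R"
    and degree_D: "\<forall>x\<in>D. (\<Sum>p\<in>{p\<in>P. fst p = x}. z p) = s"
    and degree_R: "\<forall>y\<in>R. (\<Sum>p\<in>{p\<in>P. snd p = y}. z p) = s"
begin

lemma finite_P: "finite P"
  using P_subset finite_D finite_R by (meson finite_SigmaI finite_subset)

lemma weight_from:
  assumes "X \<subseteq> D"
  shows "(\<Sum>p\<in>{p\<in>P. fst p \<in> X}. z p) = card X * s"
proof -
  have "finite X" using assms finite_D by (rule finite_subset)
  moreover have "\<forall>x\<in>X. (\<Sum>p\<in>{p\<in>P. fst p = x}. z p) = s" using assms degree_D by blast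
  ultimately show ?thesis by (simp only: sum_constant_fibres[OF finite_P] of_nat_id)
qed

lemma weight_into:
  assumes "Y \<subseteq> R"
  shows "(\<Sum>p\<in>{p\<in>P. snd p \<in> Y}. z p) = card Y * s"
proof -
  have "finite Y" using assms finite_R by (rule finite_subset)
  moreover have "\<forall>y\<in>Y. (\<Sum>p\<in>{p\<in>P. snd p = y}. z p) = s" using assms degree_R by blast
  ultimately show ?thesis by (simp only: sum_constant_fibres[OF finite_P] of_nat_id)
qed

lemma card_eq:
  assumes "0 < s"
  shows "card D = card R"
proof -
  have "card D * s = (\<Sum>p\<in>{p\<in>P. fst p \<in> D}. z p)" using weight_from[of D] by simp
  also have "{p\<in>P. fst p \<in> D} = {p\<in>P. snd p \<in> R}" using P_subset by auto
  also have "(\<Sum>p\<in>\<dots>. z p) = card R * s" using weight_into[of R] by simp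
  finally show ?thesis using assms by simp
qed

lemma Hall_condition_support:
  assumes "0 < s"
  shows "\<forall>X\<subseteq>D. card X \<le> card (\<Union>x\<in>X. {y. (x, y) \<in> P \<and> 0 < z (x, y)})"
proof (intro allI impI)
  fix X assume "X \<subseteq> D"
  define Y where "Y = (\<Union>x\<in>X. {y. (x, y) \<in> P \<and> 0 < z (x, y)})"
  have "Y \<subseteq> R" using P_subset by (auto simp: Y_def)
  have "card X * s = (\<Sum>p\<in>{p\<in>P. fst p \<in> X}. z p)" using weight_from[OF \<open>X \<subseteq> D\<close>] by simp
  also have "\<dots> = (\<Sum>p\<in>{p\<in>P. fst p \<in> X} - {p. z p = 0}. z p)"
    by (rule sum.setdiff_irrelevant[symmetric]) (use finite_P in auto)
  also have "\<dots> \<le> (\<Sum>p\<in>{p\<in>P. snd p \<in> Y}. z p)"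
    by (rule sum_mono2) (use finite_P in \<open>auto simp: Y_def\<close>)
  also have "\<dots> = card Y * s" using weight_into[OF \<open>Y \<subseteq> R\<close>] .
  finally show "card X \<le> card Y" using \<open>0 < s\<close> by simp
qed

lemma bij_betw_along_edges:
  assumes "0 < s"
  obtains f where "bij_betw f D R" and "\<forall>x\<in>D. (x, f x) \<in> P"
proof -
  obtain f where f: "inj_on f D" "\<forall>x\<in>D. f x \<in> {y. (x, y) \<in> P \<and> 0 < z (x, y)}"
    using Hall_marriage[OF finite_D Hall_condition_support[OF assms]] by blast
  have "f ` D \<subseteq> R" using f(2) P_subset by auto
  moreover have "card (f ` D) = card R" using card_eq[OF assms] card_image[OF f(1)] by simp
  ultimately have "f ` D = R" by (rule card_subset_eq[OF finite_R])
  then show thesis using that f unfolding bij_betw_def by blast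
qed

end

definition oriented_perfect_matching :: "'a set \<Rightarrow> 'a set set \<Rightarrow> 'a set \<Rightarrow> ('a \<Rightarrow> 'a) \<Rightarrow> bool" where
  "oriented_perfect_matching V E D f \<longleftrightarrow>
     D \<subseteq> V \<and> bij_betw f D (V - D) \<and> (\<forall>x\<in>D. {x, f x} \<in> E)"

lemma oriented_perfect_matching_imp_perfect_matching:
  assumes "oriented_perfect_matching V E D f"
  shows "perfect_matching V E ((\<lambda>x. {x, f x}) ` D)"
proof -
  have inj: "inj_on f D" and range: "f ` D = V - D" and edges: "\<forall>x\<in>D. {x, f x} \<in> E"
    using assms unfolding oriented_perfect_matching_def bij_betw_def by auto
  have unique: "\<exists>!e\<in>(\<lambda>x. {x, f x}) ` D. v \<in> e" if "v \<in> V" for v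
  proof -
    have "v \<in> D \<or> v \<in> f ` D" using \<open>v \<in> V\<close> range by blast
    then obtain x where x: "x \<in> D" "v \<in> {x, f x}" by blast
    have x_unique: "y = x" if "y \<in> D" "v \<in> {y, f y}" for y
    proof -
      have "f y \<notin> D" "f x \<notin> D" using range \<open>y \<in> D\<close> x(1) by auto
      then show ?thesis using that x inj_onD[OF inj] by auto
    qed
    show ?thesis
    proof (rule ex1I[of _ "{x, f x}"])
      show "{x, f x} \<in> (\<lambda>x. {x, f x}) ` D \<and> v \<in> {x, f x}" using x by blast
      fix e assume "e \<in> (\<lambda>x. {x, f x}) ` D \<and> v \<in> e"
      then obtain y where "y \<in> D" "e = {y, f y}" "v \<in> {y, f y}" by blast
      then show "e = {x, f x}" using x_unique by blast
    qed
  qed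
  show ?thesis unfolding perfect_matching_def
  proof (intro conjI ballI)
    show "(\<lambda>x. {x, f x}) ` D \<subseteq> E" using edges by blast
  qed (rule unique)
qed

lemma perfect_matching_imp_oriented_perfect_matching:
  assumes "simple_graph V E" and "perfect_matching V E M"
  obtains D f where "oriented_perfect_matching V E D f"
proof -
  have ME: "M \<subseteq> E" and cover: "\<forall>v\<in>V. \<exists>!e\<in>M. v \<in> e"
    using assms(2) unfolding perfect_matching_def by auto
  have "\<forall>e\<in>M. \<exists>x y. x \<noteq> y \<and> {x, y} = e \<and> x \<in> V \<and> y \<in> V"
    using assms(1) ME unfolding simple_graph_def by (metis subsetD)
  then obtain a b where ab: "\<forall>e\<in>M. a e \<noteq> b e \<and> {a e, b e} = e \<and> a e \<in> V \<and> b e \<in> V"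
    by metis
  have endpoint_iff: "v \<in> e \<longleftrightarrow> v = a e \<or> v = b e" if "e \<in> M" for v e
  proof -
    have "{a e, b e} = e" using ab that by blast
    then have "v \<in> e \<longleftrightarrow> v \<in> {a e, b e}" by simp
    then show ?thesis by simp
  qed
  have same_edge: "e = e'" if "e \<in> M" "e' \<in> M" "v \<in> e" "v \<in> e'" for e e' v
  proof -
    have "v = a e \<or> v = b e" using endpoint_iff that(1,3) by blast
    then have "v \<in> V" using ab that(1) by blast
    then show ?thesis using cover that by blast
  qed
  have inj_a: "inj_on a M" and inj_b: "inj_on b M"
    using same_edge endpoint_iff by (metis inj_onI)+
  have "a ` M \<inter> b ` M = {}" using ab same_edge endpoint_iff by fastforce
  moreover have "V \<subseteq> a ` M \<union> b ` M" using cover endpoint_iff by fastforce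
  moreover have "b ` M \<subseteq> V" using ab by blast
  ultimately have range_b: "V - a ` M = b ` M" by blast
  define f where "f = b \<circ> the_inv_into M a"
  have "bij_betw f (a ` M) (b ` M)" unfolding f_def
    using bij_betw_the_inv_into[OF inj_on_imp_bij_betw[OF inj_a]] inj_on_imp_bij_betw[OF inj_b]
    by (rule bij_betw_trans)
  moreover have "{a e, f (a e)} \<in> E" if "e \<in> M" for e
    using that ab ME by (auto simp: f_def the_inv_into_f_f[OF inj_a])
  moreover have "a ` M \<subseteq> V" using ab by blast
  ultimately have "oriented_perfect_matching V E (a ` M) f"
    unfolding oriented_perfect_matching_def range_b by blast
  then show thesis by (rule that)
qed

lemma dissolution_imp_oriented_perfect_matching:
  assumes "finite V" and "0 < s" and "dissolution s s V E D z"
  obtains f where "oriented_perfect_matching V E D f"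
proof -
  have D: "D \<subseteq> V" and degree_D: "\<forall>x\<in>D. (\<Sum>p\<in>{p\<in>Zset V E D. fst p = x}. z p) = s"
    and degree_R: "\<forall>y\<in>V - D. (\<Sum>p\<in>{p\<in>Zset V E D. snd p = y}. z p) = s"
    using assms(3) unfolding dissolution_def by auto
  have "regular_bipartite_weighting (Zset V E D) D (V - D) z s"
  proof
    show "Zset V E D \<subseteq> D \<times> (V - D)" by (auto simp: Zset_def)
    show "finite D" using D assms(1) by (rule finite_subset)
    show "finite (V - D)" using assms(1) by simp
  qed (fact degree_D degree_R)+
  then obtain f where "bij_betw f D (V - D)" and "\<forall>x\<in>D. (x, f x) \<in> Zset V E D"
    using regular_bipartite_weighting.bij_betw_along_edges[OF _ assms(2)] by blast
  then show thesis using that D unfolding oriented_perfect_matching_def Zset_def by blast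
qed

lemma oriented_perfect_matching_imp_dissolution:
  assumes "finite V" and "oriented_perfect_matching V E D f"
  shows "dissolution s s V E D (\<lambda>p. if snd p = f (fst p) then s else 0)"
    (is "dissolution s s V E D ?z")
proof -
  have D: "D \<subseteq> V" and inj: "inj_on f D" and range: "f ` D = V - D"
    and edges: "\<forall>x\<in>D. {x, f x} \<in> E"
    using assms(2) unfolding oriented_perfect_matching_def bij_betw_def by auto
  let ?Z = "Zset V E D"
  have "finite ?Z"
    by (rule finite_subset[of _ "V \<times> V"]) (use D assms(1) in \<open>auto simp: Zset_def\<close>)
  have matched: "(x, f x) \<in> ?Z" if "x \<in> D" for x
    using that range edges by (auto simp: Zset_def)
  have out_degree: "(\<Sum>p\<in>{p\<in>?Z. fst p = x}. ?z p) = s" if "x \<in> D" for x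
  proof -
    have "(\<Sum>p\<in>{p\<in>?Z. fst p = x}. ?z p) = (\<Sum>p\<in>{p\<in>?Z. fst p = x}. if p = (x, f x) then s else 0)"
      by (rule sum.cong) auto
    also have "\<dots> = s" using \<open>finite ?Z\<close> matched[OF that] by simp
    finally show ?thesis .
  qed
  have in_degree: "(\<Sum>p\<in>{p\<in>?Z. snd p = y}. ?z p) = s" if "y \<in> V - D" for y
  proof -
    have "y \<in> f ` D" using that range by simp
    then obtain x where x: "x \<in> D" "y = f x" by blast
    have "?z p = (if p = (x, y) then s else 0)" if "p \<in> ?Z" "snd p = y" for p
    proof -
      have "fst p \<in> D" using \<open>p \<in> ?Z\<close> by (simp add: Zset_def case_prod_beta)
      then have "f (fst p) = f x \<longleftrightarrow> fst p = x" using inj x(1) by (auto dest: inj_onD)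
      then show ?thesis using \<open>snd p = y\<close> x(2) by (cases p) auto
    qed
    then have "(\<Sum>p\<in>{p\<in>?Z. snd p = y}. ?z p) = (\<Sum>p\<in>{p\<in>?Z. snd p = y}. if p = (x, y) then s else 0)"
      by (intro sum.cong) auto
    also have "\<dots> = s" using \<open>finite ?Z\<close> matched[OF x(1)] x(2) by simp
    finally show ?thesis .
  qed
  show ?thesis unfolding dissolution_def using D out_degree in_degree by simp
qed

theorem corollary3:
  fixes s :: nat and V :: "'a set" and E :: "'a set set"
  assumes "simple_graph V E" and "0 < s"
  shows "(\<exists>D z. dissolution s s V E D z) \<longleftrightarrow> (\<exists>M. perfect_matching V E M)"
proof -
  have "finite V" using assms(1) unfolding simple_graph_def by blast
  show ?thesis
  proof
    assume "\<exists>D z. dissolution s s V E D z"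
    then obtain D z where "dissolution s s V E D z" by blast
    then obtain f where "oriented_perfect_matching V E D f"
      using dissolution_imp_oriented_perfect_matching \<open>finite V\<close> \<open>0 < s\<close> by blast
    then show "\<exists>M. perfect_matching V E M"
      using oriented_perfect_matching_imp_perfect_matching by blast
  next
    assume "\<exists>M. perfect_matching V E M"
    then obtain D f where "oriented_perfect_matching V E D f"
      using perfect_matching_imp_oriented_perfect_matching assms(1) by blast
    then show "\<exists>D z. dissolution s s V E D z"
      using oriented_perfect_matching_imp_dissolution \<open>finite V\<close> by blast
  qed
qed

end
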